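(* Fix $\alpha>0$. For each $N\ge 2$, let $T_1,\ldots,T_N$ be drawn independently and uniformly at random from $\{n\in\mathbb{N}: n\le e^{\alpha N}\}$, and let $\Gamma_{j,k}=\gcd(T_j,T_k)$. Let $\mathcal{P}$ denote the set of rational primes. Then for every $s\in(0,1)$ the product \[ C_s:=\prod_{p\in\mathcal{P}}\left(1+\frac{p^s-1}{p^2-p^s}\right) \] is finite, and for every $b>0$ and every $N\ge 2$, \[ \mathbb{P}\Big[\max_{1\le j<k\le N}\Gamma_{j,k}\ge N^{2/s}b^{1/s}\Big]\le \frac{C_s}{2b}. \] *)

theory Defs
  imports "HOL-Probability.Probability"
begin

definition Cfactor :: "real \<Rightarrow> nat \<Rightarrow> real" where
  "Cfactor s n = (if prime n then 1 + (real n powr s - 1) / (real n ^ 2 - real n powr s) else 1)"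

definition C_const :: "real \<Rightarrow> real" where
  "C_const s = (\<Prod>n. Cfactor s n)"

text \<open>The sample space {n in N : n <= e^(alpha N)}, N = positive integers.\<close>
definition sample_set :: "real \<Rightarrow> nat \<Rightarrow> nat set" where
  "sample_set \<alpha> N = {n. 1 \<le> n \<and> real n \<le> exp (\<alpha> * real N)}"

text \<open>Joint law of T_1..T_N, i.i.d. uniform on sample_set (values off {1..N} are 0).\<close>
definition T_pmf :: "real \<Rightarrow> nat \<Rightarrow> (nat \<Rightarrow> nat) pmf" where
  "T_pmf \<alpha> N = Pi_pmf {1..N} 0 (\<lambda>_. pmf_of_set (sample_set \<alpha> N))"

end

theory Submission
  imports Defs
begin

(*
  The number-theoretic core is the mean-value estimate
      \<Sum>a,b \<le> M. gcd(a,b)^s  \<le>  M^2 * C_s        (0 < s < 1).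
  Writing t = p^s, the p-part of gcd(a,b)^s is t^m with m = multiplicity p (gcd a b),
  and t^m telescopes as \<Sum>_{k \<le> m} (t^k - t^(k-1)) = \<Sum>_k c_k [p^k | a][p^k | b].
  Expanding prime by prime (induction over a finite set of primes, carrying a
  coprime modulus d) and counting multiples (#{a \<le> M. e | a} \<le> M/e) bounds the
  sum by M^2 times the product over p \<le> M of \<Sum>_k c_k / p^(2k) \<le> Cfactor s p,
  a partial product of C_s.  Since Cfactor s p - 1 = O(p^(s-2)), C_s converges.

  Markov's inequality turns the mean-value estimate into
  P[gcd(T_j,T_k) \<ge> x] \<le> C_s / x^s for one pair, and a union bound over the
  N(N-1)/2 \<le> N^2/2 pairs with x^s = N^2 b gives the theorem.
*)

section \<open>The Euler product \<open>C_s\<close>\<close>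

text \<open>For \<open>1 < x\<close> and \<open>0 < s < 1\<close> the power \<open>x^s\<close> lies in \<open>[1, x)\<close>;
  this keeps every Euler factor well defined and at least 1.\<close>

lemma powr_between_one_and_base:
  fixes x s :: real
  assumes "1 < x" "0 < s" "s < 1"
  shows "1 \<le> x powr s" and "x powr s < x"
proof -
  show "1 \<le> x powr s" using assms by (intro ge_one_powr_ge_zero) auto
  have "x powr s < x powr 1" using assms by (intro powr_less_mono) auto
  then show "x powr s < x" using assms by simp
qed

lemma prime_powr_bounds:
  assumes "prime (p::nat)" "0 < s" "s < 1"
  shows "1 \<le> real p powr s" and "real p powr s < real p" and "2 \<le> real p"
proof -
  show p2: "2 \<le> real p" using prime_ge_2_nat[OF assms(1)] by linarith
  show "1 \<le> real p powr s" "real p powr s < real p"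
    using powr_between_one_and_base[of "real p" s] p2 assms by auto
qed

lemma Cfactor_excess:
  assumes "0 < s" "s < 1"
  shows "0 \<le> Cfactor s n - 1" and "Cfactor s n - 1 \<le> 2 * real n powr (s - 2)"
proof -
  have "0 \<le> Cfactor s n - 1 \<and> Cfactor s n - 1 \<le> 2 * real n powr (s - 2)"
  proof (cases "prime n")
    case True
    define t where "t = real n powr s"
    have t1: "1 \<le> t" and tn: "t < real n" and n2: "2 \<le> real n"
      using prime_powr_bounds[OF True assms] by (simp_all add: t_def)
    have "real n * 2 \<le> real n * real n" using n2 by (intro mult_left_mono) auto
    then have half: "real n ^ 2 / 2 \<le> real n ^ 2 - t" using tn by (simp add: power2_eq_square)
    have pos: "0 < real n ^ 2 / 2" using n2 by simp
    have "(t - 1) / (real n ^ 2 - t) \<le> t / (real n ^ 2 / 2)"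
      using half pos t1 by (intro frac_le) auto
    also have "\<dots> = 2 * (t / real n powr 2)" using n2 by (simp add: powr_numeral)
    also have "t / real n powr 2 = real n powr (s - 2)" by (simp add: t_def powr_diff)
    finally have "(t - 1) / (real n ^ 2 - t) \<le> 2 * real n powr (s - 2)" .
    moreover have "0 \<le> (t - 1) / (real n ^ 2 - t)" using t1 half pos by simp
    ultimately show ?thesis using True by (simp add: Cfactor_def t_def)
  qed (simp add: Cfactor_def)
  then show "0 \<le> Cfactor s n - 1" "Cfactor s n - 1 \<le> 2 * real n powr (s - 2)" by auto
qed

text \<open>Hence \<open>\<Sum>|Cfactor s n - 1|\<close> converges (as \<open>s - 2 < -1\<close>), and so does the product \<open>C_s\<close>.\<close>

theorem Cfactor_convergent:
  assumes "0 < s" "s < 1"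
  shows "convergent_prod (Cfactor s)"
proof -
  have "summable (\<lambda>n. 2 * real n powr (s - 2))"
    using summable_real_powr_iff[of "s - 2"] assms by (intro summable_mult) auto
  then have "summable (\<lambda>n. norm (Cfactor s n - 1))"
    by (rule summable_comparison_test'[where N = 0]) (use Cfactor_excess[OF assms] in auto)
  then show ?thesis
    by (intro abs_convergent_prod_imp_convergent_prod summable_imp_abs_convergent_prod)
qed

text \<open>All factors are at least 1, so every partial product is bounded by \<open>C_s\<close>.\<close>

lemma partial_prod_le_C_const:
  assumes "0 < s" "s < 1"
  shows "(\<Prod>n<K. Cfactor s n) \<le> C_const s"
  unfolding C_const_def
  using Cfactor_convergent[OF assms] Cfactor_excess(1)[OF assms]
  by (intro prod_le_prodinf) (auto simp: convergent_prod_has_prod_iff intro: order.trans[OF zero_le_one])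

lemma prime_prod_le_C_const:
  assumes "0 < s" "s < 1"
  shows "(\<Prod>p\<in>{p. prime p \<and> p \<le> M}. Cfactor s p) \<le> C_const s"
proof -
  have "(\<Prod>p\<in>{p. prime p \<and> p \<le> M}. Cfactor s p) = (\<Prod>n<Suc M. Cfactor s n)"
    by (intro prod.mono_neutral_left) (auto simp: Cfactor_def)
  also have "\<dots> \<le> C_const s" by (rule partial_prod_le_C_const[OF assms])
  finally show ?thesis .
qed

section \<open>The mean value of \<open>gcd(a,b)^s\<close>\<close>

text \<open>Increments of the powers of \<open>t\<close>: \<open>t^m\<close> is the sum of the first \<open>m+1\<close> of them.\<close>

fun power_increment :: "real \<Rightarrow> nat \<Rightarrow> real" where
  "power_increment t 0 = 1"
| "power_increment t (Suc k) = t ^ Suc k - t ^ k"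

lemma power_increment_nonneg: "1 \<le> t \<Longrightarrow> 0 \<le> power_increment t k"
  by (cases k) (auto intro: power_increasing)

lemma power_as_increment_sum:
  assumes "m \<le> K"
  shows "t ^ m = (\<Sum>k\<le>K. power_increment t k * of_bool (k \<le> m))"
proof -
  have "(\<Sum>k\<le>K. power_increment t k * of_bool (k \<le> m)) = sum (power_increment t) {..m}"
    using assms by (auto simp: sum.If_cases Int_def intro: sum.cong)
  also have "\<dots> = t ^ m" by (induction m) auto
  finally show ?thesis by simp
qed

text \<open>The increments weighted by \<open>Q^-k\<close> form a geometric series with ratio \<open>t/Q\<close>,
  whose sum \<open>1 + (t - 1)/(Q - t)\<close> is, for \<open>t = p^s\<close> and \<open>Q = p^2\<close>, the Euler factor at \<open>p\<close>.\<close>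

lemma weighted_increment_sum_le:
  fixes t Q :: real
  assumes "1 \<le> t" "t < Q"
  shows "(\<Sum>k\<le>K. power_increment t k / Q ^ k) \<le> 1 + (t - 1) / (Q - t)"
proof (cases K)
  case 0
  then show ?thesis using assms by simp
next
  case (Suc K')
  define \<rho> where "\<rho> = t / Q"
  have Q0: "0 < Q" using assms by linarith
  have \<rho>: "0 \<le> \<rho>" "\<rho> < 1" using assms Q0 by (auto simp: \<rho>_def)
  have increment_term: "power_increment t (Suc i) / Q ^ Suc i = (t - 1) / Q * \<rho> ^ i" for i
    using Q0 by (simp add: \<rho>_def power_divide field_simps)
  have geometric: "(\<Sum>i<Suc K'. \<rho> ^ i) \<le> 1 / (1 - \<rho>)"
    using \<rho> by (simp add: sum_gp_strict divide_right_mono del: sum.lessThan_Suc)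
  have "(\<Sum>k\<le>K. power_increment t k / Q ^ k) = 1 + (t - 1) / Q * (\<Sum>i<Suc K'. \<rho> ^ i)"
    unfolding Suc sum.atMost_Suc_shift
    by (simp only: increment_term sum_distrib_left lessThan_Suc_atMost) simp
  also have "\<dots> \<le> 1 + (t - 1) / Q * (1 / (1 - \<rho>))"
    using geometric assms Q0 by (intro add_left_mono mult_left_mono) auto
  also have "(t - 1) / Q * (1 / (1 - \<rho>)) = (t - 1) / (Q - t)"
    using assms Q0 by (simp add: \<rho>_def field_simps)
  finally show ?thesis .
qed

lemma prime_increment_sum_le_Cfactor:
  assumes "prime q" "0 < s" "s < 1"
  shows "(\<Sum>k\<le>K. power_increment (real q powr s) k / (real q ^ 2) ^ k) \<le> Cfactor s q"
proof -
  note b = prime_powr_bounds[OF assms]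
  have "real q < real q ^ 2" using b(3) by (simp add: power2_eq_square)
  then have "real q powr s < real q ^ 2" using b(2) by linarith
  then show ?thesis
    using weighted_increment_sum_le[OF b(1), of "real q ^ 2" K] assms(1) by (simp add: Cfactor_def)
qed

lemma card_multiples_le:
  assumes "0 < d"
  shows "real (card ({1..M} \<inter> {a. d dvd a})) \<le> real M / real d"
proof -
  have "{1..M} \<inter> {a. d dvd a} \<subseteq> (\<lambda>i. d * i) ` {1..M div d}"
  proof
    fix a assume "a \<in> {1..M} \<inter> {a. d dvd a}"
    then obtain i where a: "a = d * i" "1 \<le> a" "a \<le> M" by auto
    then have "1 \<le> i" by (cases i) auto
    moreover have "i \<le> M div d" using a assms by (metis div_le_mono nonzero_mult_div_cancel_left neq0_conv)
    ultimately show "a \<in> (\<lambda>i. d * i) ` {1..M div d}" using a by auto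
  qed
  then have "card ({1..M} \<inter> {a. d dvd a}) \<le> card ((\<lambda>i. d * i) ` {1..M div d})"
    by (intro card_mono) auto
  also have "\<dots> \<le> M div d" using card_image_le[of "{1..M div d}" "\<lambda>i. d * i"] by simp
  finally have "real (card ({1..M} \<inter> {a. d dvd a})) \<le> real (M div d)" by simp
  also have "real (M div d) \<le> real M / real d"
  proof -
    have "real (M div d) * real d \<le> real M"
      by (metis div_mult_mod_eq le_add1 of_nat_le_iff of_nat_mult)
    then show ?thesis using assms by (simp add: pos_le_divide_eq)
  qed
  finally show ?thesis .
qed

lemma divisor_pairs_sum_le:
  assumes "0 < d"
  shows "(\<Sum>a\<in>{1..M}. \<Sum>b\<in>{1..M}. of_bool (d dvd gcd a b) :: real) \<le> (real M / real d) ^ 2"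
proof -
  have "(\<Sum>a\<in>{1..M}. \<Sum>b\<in>{1..M}. of_bool (d dvd gcd a b) :: real)
      = (\<Sum>a\<in>{1..M}. of_bool (d dvd a)) * (\<Sum>b\<in>{1..M}. of_bool (d dvd b))"
    by (simp only: gcd_greatest_iff of_bool_conj sum_product)
  also have "\<dots> = real (card ({1..M} \<inter> {a. d dvd a})) * real (card ({1..M} \<inter> {a. d dvd a}))"
    by simp
  also have "\<dots> \<le> (real M / real d) * (real M / real d)"
    using card_multiples_le[OF assms] by (intro mult_mono) auto
  finally show ?thesis by (simp add: power2_eq_square)
qed

lemma gcd_in_range:
  assumes "a \<in> {1..M}" "b \<in> {1..M}"
  shows "0 < gcd a b" and "gcd a b \<le> (M::nat)"
proof -
  show "0 < gcd a b" using assms by simp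
  have "gcd a b \<le> a" using assms by (intro gcd_le1_nat) auto
  then show "gcd a b \<le> M" using assms(1) by (meson atLeastAtMost_iff order_trans)
qed

text \<open>The exponent of a prime in \<open>n > 0\<close> is at most \<open>n\<close>; so \<open>K = M\<close> terms suffice
  in the telescoping expansion for every \<open>gcd a b \<le> M\<close>.\<close>

lemma multiplicity_le_self:
  assumes "prime (q::nat)" "0 < n"
  shows "multiplicity q n \<le> n"
proof -
  let ?m = "multiplicity q n"
  have "?m < 2 ^ ?m" by (rule less_exp)
  also have "2 ^ ?m \<le> q ^ ?m" using prime_ge_2_nat[OF assms(1)] by (intro power_mono) auto
  also have "q ^ ?m \<le> n" using assms(2) by (intro dvd_imp_le multiplicity_dvd)
  finally show ?thesis by simp
qed

definition part_powr :: "real \<Rightarrow> nat set \<Rightarrow> nat \<Rightarrow> real" where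
  "part_powr s P n = (\<Prod>p\<in>P. (real p powr s) ^ multiplicity p n)"

lemma part_powr_full:
  assumes "finite P" "\<forall>p\<in>P. prime p" "prime_factors n \<subseteq> P" "0 < n"
  shows "part_powr s P n = real n powr s"
proof -
  have factor: "(real p powr s) ^ k = (real p ^ k) powr s" if "prime p" for p k
  proof -
    have p: "0 < real p" using prime_gt_0_nat[OF that] by simp
    have "(real p powr s) ^ k = real p powr (real k * s)" using p by (simp add: powr_power)
    also have "\<dots> = (real p powr real k) powr s" by (simp add: powr_powr)
    also have "real p powr real k = real p ^ k" using p by (rule powr_realpow)
    finally show ?thesis .
  qed
  have "(\<Prod>p\<in>P. p ^ multiplicity p n) = (\<Prod>p\<in>prime_factors n. p ^ multiplicity p n)"
    using assms
    by (intro prod.mono_neutral_right) (auto simp: in_prime_factors_iff intro!: not_dvd_imp_multiplicity_0)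
  also have "\<dots> = n" using prod_prime_factors[of n] assms(4) by simp
  finally have "real (\<Prod>p\<in>P. p ^ multiplicity p n) = real n" by (rule arg_cong)
  then have n: "(\<Prod>p\<in>P. real p ^ multiplicity p n) = real n" by (simp add: of_nat_prod)
  have "part_powr s P n = (\<Prod>p\<in>P. (real p ^ multiplicity p n) powr s)"
    unfolding part_powr_def using assms(2) by (intro prod.cong refl) (simp add: factor)
  also have "\<dots> = (\<Prod>p\<in>P. real p ^ multiplicity p n) powr s"
    by (rule prod_powr_distrib[symmetric])
  finally show ?thesis by (simp only: n)
qed

lemma part_powr_insert:
  assumes "finite P" "q \<notin> P"
  shows "part_powr s (insert q P) n = (real q powr s) ^ multiplicity q n * part_powr s P n"
  using assms by (simp add: part_powr_def)

lemma indicator_power_expansion: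
  fixes t :: real and d q g :: nat
  assumes "prime q" "coprime d q" "0 < g" "multiplicity q g \<le> K"
  shows "of_bool (d dvd g) * t ^ multiplicity q g
       = (\<Sum>k\<le>K. power_increment t k * of_bool (d * q ^ k dvd g))"
proof -
  have key: "of_bool (d dvd g) * of_bool (k \<le> multiplicity q g) = (of_bool (d * q ^ k dvd g) :: real)"
    for k
  proof -
    have "k \<le> multiplicity q g \<longleftrightarrow> q ^ k dvd g"
      using power_dvd_iff_le_multiplicity[where p = q and n = k and x = g] assms(1,3) not_prime_unit by auto
    moreover have "d dvd g \<and> q ^ k dvd g \<longleftrightarrow> d * q ^ k dvd g"
      using assms(2) by (auto intro: divides_mult dest: dvd_mult_left dvd_mult_right)
    ultimately show ?thesis by auto
  qed
  have "of_bool (d dvd g) * t ^ multiplicity q g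
      = (\<Sum>k\<le>K. of_bool (d dvd g) * (power_increment t k * of_bool (k \<le> multiplicity q g)))"
    by (simp only: power_as_increment_sum[OF assms(4)] sum_distrib_left)
  also have "\<dots> = (\<Sum>k\<le>K. power_increment t k * of_bool (d * q ^ k dvd g))"
    using key by (intro sum.cong refl) (metis mult.left_commute)
  finally show ?thesis .
qed

text \<open>Multiplying \<open>d\<close> by a power of another prime creates no new prime divisor \<open>p\<close>;
  this keeps the moduli in the induction below coprime to the remaining primes.\<close>

lemma not_dvd_times_other_prime_power:
  assumes "prime p" "prime q" "p \<noteq> q" "\<not> p dvd d"
  shows "\<not> p dvd d * q ^ k"
proof
  assume "p dvd d * q ^ k"
  then have "p dvd q" using assms prime_dvd_power[of p q k] by (auto simp: prime_dvd_mult_iff)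
  then show False using assms primes_dvd_imp_eq by blast
qed

lemma part_powr_sum_le:
  assumes "finite P" "\<forall>p\<in>P. prime p" "0 < s" "s < 1" "0 < d" "\<forall>p\<in>P. \<not> p dvd d"
  shows "(\<Sum>a\<in>{1..M}. \<Sum>b\<in>{1..M}. of_bool (d dvd gcd a b) * part_powr s P (gcd a b))
       \<le> (real M / real d) ^ 2 * (\<Prod>p\<in>P. Cfactor s p)"
  using assms(1,2,5,6)
proof (induction P arbitrary: d rule: finite_induct)
  case empty
  then show ?case using divisor_pairs_sum_le[of d M] by (simp add: part_powr_def)
next
  case (insert q P)
  have q: "prime q" and P: "\<forall>p\<in>P. prime p" using insert.prems by auto
  define t where "t = real q powr s"
  define S where "S e = (\<Sum>a\<in>{1..M}. \<Sum>b\<in>{1..M}. of_bool (e dvd gcd a b) * part_powr s P (gcd a b))"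
    for e
  define Cprod where "Cprod = (\<Prod>p\<in>P. Cfactor s p)"
  have Cprod: "0 \<le> Cprod"
    unfolding Cprod_def using Cfactor_excess(1)[OF assms(3,4)] by (intro prod_nonneg) (auto intro: order.trans[of 0 1])
  have "coprime q d" using insert.prems q by (intro prime_imp_coprime) auto
  then have coprime: "coprime d q" by (simp add: coprime_commute)
  have IH: "S (d * q ^ k) \<le> (real M / real (d * q ^ k)) ^ 2 * Cprod" for k
  proof -
    have "\<not> p dvd d * q ^ k" if "p \<in> P" for p
      using that insert.hyps(2) insert.prems P q by (intro not_dvd_times_other_prime_power) auto
    moreover have "0 < d * q ^ k" using insert.prems q by (simp add: prime_gt_0_nat)
    ultimately show ?thesis unfolding S_def Cprod_def using insert.IH[OF P] by blast
  qed
  have expand: "of_bool (d dvd gcd a b) * part_powr s (insert q P) (gcd a b)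
      = (\<Sum>k\<le>M. power_increment t k * (of_bool (d * q ^ k dvd gcd a b) * part_powr s P (gcd a b)))"
    if "a \<in> {1..M}" "b \<in> {1..M}" for a b
  proof -
    note g = gcd_in_range[OF that]
    have "multiplicity q (gcd a b) \<le> M" using multiplicity_le_self[OF q g(1)] g(2) by linarith
    note split = indicator_power_expansion[OF q coprime g(1) this, of t]
    show ?thesis
      unfolding part_powr_insert[OF insert.hyps] t_def[symmetric]
      by (simp only: mult.assoc[symmetric] split sum_distrib_right)
  qed
  have "(\<Sum>a\<in>{1..M}. \<Sum>b\<in>{1..M}. of_bool (d dvd gcd a b) * part_powr s (insert q P) (gcd a b))
      = (\<Sum>a\<in>{1..M}. \<Sum>b\<in>{1..M}. \<Sum>k\<le>M.
           power_increment t k * (of_bool (d * q ^ k dvd gcd a b) * part_powr s P (gcd a b)))"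
    using expand by (intro sum.cong refl) auto
  also have "\<dots> = (\<Sum>k\<le>M. power_increment t k * S (d * q ^ k))"
    unfolding S_def
    by (simp only: sum.swap[where A = "{1..M}" and B = "{..M}"] sum_distrib_left[symmetric])
  also have "\<dots> \<le> (\<Sum>k\<le>M. power_increment t k * ((real M / real (d * q ^ k)) ^ 2 * Cprod))"
  proof (intro sum_mono mult_left_mono)
    fix k
    show "S (d * q ^ k) \<le> (real M / real (d * q ^ k)) ^ 2 * Cprod" by (rule IH)
    show "0 \<le> power_increment t k"
      using power_increment_nonneg prime_powr_bounds(1)[OF q assms(3,4)] by (simp add: t_def)
  qed
  also have "\<dots> = (real M / real d) ^ 2 * Cprod * (\<Sum>k\<le>M. power_increment t k / (real q ^ 2) ^ k)"
  proof -
    have "power_increment t k * ((real M / real (d * q ^ k)) ^ 2 * Cprod)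
        = (real M / real d) ^ 2 * Cprod * (power_increment t k / (real q ^ 2) ^ k)" for k
      by (simp add: power_divide power_mult_distrib flip: power_mult) (simp add: mult_ac power_mult)
    then show ?thesis by (simp add: sum_distrib_left)
  qed
  also have "\<dots> \<le> (real M / real d) ^ 2 * Cprod * Cfactor s q"
    using prime_increment_sum_le_Cfactor[OF q assms(3,4)] Cprod
    by (intro mult_left_mono) (auto simp: t_def)
  also have "\<dots> = (real M / real d) ^ 2 * (\<Prod>p\<in>insert q P. Cfactor s p)"
    using insert.hyps by (simp add: Cprod_def)
  finally show ?case .
qed

text \<open>The mean-value estimate: taking \<open>d = 1\<close> and \<open>P\<close> the primes up to \<open>M\<close>.\<close>

theorem gcd_powr_sum_le:
  assumes "0 < s" "s < 1"
  shows "(\<Sum>a\<in>{1..M}. \<Sum>b\<in>{1..M}. real (gcd a b) powr s) \<le> real M ^ 2 * C_const s"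
proof -
  let ?P = "{p. prime p \<and> p \<le> M}"
  have full: "part_powr s ?P (gcd a b) = real (gcd a b) powr s" if "a \<in> {1..M}" "b \<in> {1..M}" for a b
  proof (rule part_powr_full)
    have "gcd a b \<le> M" using gcd_in_range[OF that] by simp
    show "prime_factors (gcd a b) \<subseteq> ?P"
    proof
      fix p assume p: "p \<in> prime_factors (gcd a b)"
      then have "p \<le> gcd a b"
        using gcd_in_range(1)[OF that] by (intro dvd_imp_le) (auto simp: in_prime_factors_iff)
      then show "p \<in> ?P" using p \<open>gcd a b \<le> M\<close> by (auto simp: in_prime_factors_iff)
    qed
  qed (use that in auto)
  have "(\<Sum>a\<in>{1..M}. \<Sum>b\<in>{1..M}. real (gcd a b) powr s)
      = (\<Sum>a\<in>{1..M}. \<Sum>b\<in>{1..M}. of_bool (1 dvd gcd a b) * part_powr s ?P (gcd a b))"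
    using full by (intro sum.cong refl) simp
  also have "\<dots> \<le> (real M / real 1) ^ 2 * (\<Prod>p\<in>?P. Cfactor s p)"
    by (rule part_powr_sum_le) (use assms in auto)
  also have "\<dots> = real M ^ 2 * (\<Prod>p\<in>?P. Cfactor s p)" by simp
  also have "\<dots> \<le> real M ^ 2 * C_const s"
    by (intro mult_left_mono prime_prod_le_C_const assms) simp
  finally show ?thesis .
qed

text \<open>Markov's inequality: few pairs have a large gcd.\<close>

lemma card_large_gcd_pairs:
  assumes "0 < x" "0 < s" "s < 1"
  shows "real (card ({1..M} \<times> {1..M} \<inter> {(a, b). x \<le> real (gcd a b)}))
     \<le> real M ^ 2 * C_const s / x powr s"
proof -
  let ?S = "{1..M::nat}"
  let ?B = "?S \<times> ?S \<inter> {(a, b). x \<le> real (gcd a b)}"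
  let ?g = "\<lambda>z. real (gcd (fst z) (snd z)) powr s / x powr s"
  have xs: "0 < x powr s" using assms by simp
  have "real (card ?B) = (\<Sum>z\<in>?B. 1)" by simp
  also have "\<dots> \<le> (\<Sum>z\<in>?B. ?g z)"
  proof (intro sum_mono)
    fix z assume "z \<in> ?B"
    then have "x powr s \<le> real (gcd (fst z) (snd z)) powr s"
      using assms by (intro powr_mono2) auto
    then show "1 \<le> ?g z" using xs by simp
  qed
  also have "\<dots> \<le> (\<Sum>z\<in>?S \<times> ?S. ?g z)"
    by (intro sum_mono2) auto
  also have "\<dots> = (\<Sum>a\<in>?S. \<Sum>b\<in>?S. real (gcd a b) powr s) / x powr s"
    by (simp add: sum.cartesian_product sum_divide_distrib case_prod_beta)
  also have "\<dots> \<le> real M ^ 2 * C_const s / x powr s"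
    using gcd_powr_sum_le[OF assms(2,3)] xs by (intro divide_right_mono) auto
  finally show ?thesis .
qed

section \<open>Probability\<close>

lemma sample_set_eq:
  assumes "0 \<le> \<alpha>"
  shows "sample_set \<alpha> N = {1..nat \<lfloor>exp (\<alpha> * real N)\<rfloor>}"
    and "1 \<le> nat \<lfloor>exp (\<alpha> * real N)\<rfloor>"
proof -
  have e: "1 \<le> exp (\<alpha> * real N)" using assms by simp
  have "real n \<le> exp (\<alpha> * real N) \<longleftrightarrow> n \<le> nat \<lfloor>exp (\<alpha> * real N)\<rfloor>" for n
  proof
    assume "real n \<le> exp (\<alpha> * real N)"
    then show "n \<le> nat \<lfloor>exp (\<alpha> * real N)\<rfloor>" by (rule le_nat_floor)
  next
    assume "n \<le> nat \<lfloor>exp (\<alpha> * real N)\<rfloor>"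
    moreover have "0 \<le> \<lfloor>exp (\<alpha> * real N)\<rfloor>" using e by simp
    ultimately have "int n \<le> \<lfloor>exp (\<alpha> * real N)\<rfloor>" by (simp add: le_nat_iff)
    then show "real n \<le> exp (\<alpha> * real N)" by (simp add: le_floor_iff)
  qed
  then show "sample_set \<alpha> N = {1..nat \<lfloor>exp (\<alpha> * real N)\<rfloor>}"
    unfolding sample_set_def atLeastAtMost_def atLeast_def atMost_def by blast
  show "1 \<le> nat \<lfloor>exp (\<alpha> * real N)\<rfloor>" using e by (intro le_nat_floor) simp
qed

lemma Pi_pmf_pair:
  assumes "finite A" "j \<in> A" "k \<in> A" "j \<noteq> k"
  shows "map_pmf (\<lambda>T. (T j, T k)) (Pi_pmf A dflt p) = pair_pmf (p j) (p k)"
proof -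
  define B where "B = A - {j, k}"
  have A: "A = insert j (insert k B)" using assms by (auto simp: B_def)
  have fB: "finite B" using assms by (simp add: B_def)
  have "Pi_pmf A dflt p = map_pmf (\<lambda>(y, f). f(j := y)) (pair_pmf (p j) (Pi_pmf (insert k B) dflt p))"
    unfolding A using fB assms by (subst Pi_pmf_insert) (auto simp: B_def)
  also have "Pi_pmf (insert k B) dflt p = map_pmf (\<lambda>(y, f). f(k := y)) (pair_pmf (p k) (Pi_pmf B dflt p))"
    using fB by (subst Pi_pmf_insert) (auto simp: B_def)
  finally have eq: "Pi_pmf A dflt p = map_pmf (\<lambda>(y, f). f(j := y))
      (pair_pmf (p j) (map_pmf (\<lambda>(y, f). f(k := y)) (pair_pmf (p k) (Pi_pmf B dflt p))))" .
  show ?thesis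
    unfolding eq using assms
    by (simp add: pmf.map_comp o_def case_prod_unfold map_pmf_def pair_pmf_def bind_assoc_pmf
        bind_return_pmf bind_return_pmf')
qed

lemma pair_pmf_of_set:
  assumes "finite S" "S \<noteq> {}"
  shows "pair_pmf (pmf_of_set S) (pmf_of_set S) = pmf_of_set (S \<times> S)"
proof (rule pmf_eqI)
  fix z :: "'a \<times> 'a"
  obtain a b where z: "z = (a, b)" by (cases z)
  have ne: "S \<times> S \<noteq> {}" using assms by simp
  have "pmf (pair_pmf (pmf_of_set S) (pmf_of_set S)) z = pmf (pmf_of_set S) a * pmf (pmf_of_set S) b"
    by (simp add: z pmf_pair)
  also have "\<dots> = indicator S a / card S * (indicator S b / card S)"
    using assms by simp
  also have "\<dots> = indicator (S \<times> S) (a, b) / card (S \<times> S)"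
    by (simp add: indicator_def card_cartesian_product)
  also have "\<dots> = pmf (pmf_of_set (S \<times> S)) z"
    using assms ne by (simp add: z)
  finally show "pmf (pair_pmf (pmf_of_set S) (pmf_of_set S)) z = pmf (pmf_of_set (S \<times> S)) z" .
qed

lemma pair_gcd_tail:
  assumes "0 \<le> \<alpha>" "0 < s" "s < 1" "j \<in> {1..N}" "k \<in> {1..N}" "j \<noteq> k" "0 < x"
  shows "measure_pmf.prob (T_pmf \<alpha> N) {T. x \<le> real (gcd (T j) (T k))} \<le> C_const s / x powr s"
proof -
  define M where "M = nat \<lfloor>exp (\<alpha> * real N)\<rfloor>"
  have S: "sample_set \<alpha> N = {1..M}" and M1: "1 \<le> M"
    using sample_set_eq[OF assms(1), of N] by (auto simp: M_def)
  let ?S = "{1..M}"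
  let ?A = "{(a, b). x \<le> real (gcd a b)}"
  have "measure_pmf.prob (T_pmf \<alpha> N) {T. x \<le> real (gcd (T j) (T k))}
      = measure_pmf.prob (map_pmf (\<lambda>T. (T j, T k)) (T_pmf \<alpha> N)) ?A"
    by (simp add: measure_map_pmf vimage_def)
  also have "map_pmf (\<lambda>T. (T j, T k)) (T_pmf \<alpha> N) = pmf_of_set (?S \<times> ?S)"
    unfolding T_pmf_def S using assms M1 by (simp add: Pi_pmf_pair pair_pmf_of_set)
  also have "measure_pmf.prob (pmf_of_set (?S \<times> ?S)) ?A
      = real (card (?S \<times> ?S \<inter> ?A)) / real M ^ 2"
    using M1 by (simp add: measure_pmf_of_set card_cartesian_product power2_eq_square)
  also have "\<dots> \<le> (real M ^ 2 * C_const s / x powr s) / real M ^ 2"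
    using card_large_gcd_pairs[OF assms(7,2,3), of M] by (intro divide_right_mono) auto
  also have "\<dots> = C_const s / x powr s" using M1 by simp
  finally show ?thesis .
qed

lemma prob_Max_ge_le_sum:
  assumes "finite I" "I \<noteq> {}"
  shows "measure_pmf.prob M {\<omega>. x \<le> Max ((\<lambda>i. f \<omega> i) ` I)}
       \<le> (\<Sum>i\<in>I. measure_pmf.prob M {\<omega>. x \<le> f \<omega> i})"
proof -
  have "{\<omega>. x \<le> Max ((\<lambda>i. f \<omega> i) ` I)} = (\<Union>i\<in>I. {\<omega>. x \<le> f \<omega> i})"
    using assms by (auto simp: Max_ge_iff)
  then show ?thesis
    using assms by (simp add: measure_pmf.finite_measure_subadditive_finite)
qed

lemma card_ordered_pairs: "2 * card {(j, k). 1 \<le> j \<and> j < k \<and> k \<le> (N::nat)} \<le> N ^ 2"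
proof -
  let ?P = "{(j, k). 1 \<le> j \<and> j < k \<and> k \<le> (N::nat)}"
  have fin: "finite ?P" by (rule finite_subset[of _ "{1..N} \<times> {1..N}"]) auto
  have "card (prod.swap ` ?P) = card ?P" by (rule card_image) (simp add: inj_on_def)
  moreover have "card (?P \<union> prod.swap ` ?P) = card ?P + card (prod.swap ` ?P)"
    using fin by (intro card_Un_disjoint) auto
  moreover have "card (?P \<union> prod.swap ` ?P) \<le> card ({1..N} \<times> {1..N})"
    by (intro card_mono) auto
  ultimately show ?thesis by (simp add: card_cartesian_product power2_eq_square)
qed

lemma max_gcd_tail:
  assumes "0 \<le> \<alpha>" "0 < s" "s < 1" "2 \<le> N" "0 < x"
  shows "measure_pmf.prob (T_pmf \<alpha> N)
           {T. x \<le> Max {real (gcd (T j) (T k)) | j k. 1 \<le> j \<and> j < k \<and> k \<le> N}}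
       \<le> real (N ^ 2) / 2 * (C_const s / x powr s)"
proof -
  define Pairs where "Pairs = {(j, k). 1 \<le> j \<and> j < k \<and> k \<le> N}"
  have fin: "finite Pairs" unfolding Pairs_def
    by (rule finite_subset[of _ "{1..N} \<times> {1..N}"]) auto
  have "(1, 2) \<in> Pairs" using assms(4) by (simp add: Pairs_def)
  then have ne: "Pairs \<noteq> {}" by auto
  have C: "0 \<le> C_const s" using partial_prod_le_C_const[OF assms(2,3), of 0] by simp
  have "{real (gcd (T j) (T k)) | j k. 1 \<le> j \<and> j < k \<and> k \<le> N}
      = (\<lambda>(j, k). real (gcd (T j) (T k))) ` Pairs" for T :: "nat \<Rightarrow> nat"
    by (auto simp: Pairs_def)
  then have "measure_pmf.prob (T_pmf \<alpha> N)
           {T. x \<le> Max {real (gcd (T j) (T k)) | j k. 1 \<le> j \<and> j < k \<and> k \<le> N}}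
      \<le> (\<Sum>(j, k)\<in>Pairs. measure_pmf.prob (T_pmf \<alpha> N) {T. x \<le> real (gcd (T j) (T k))})"
    using prob_Max_ge_le_sum[OF fin ne, of _ x "\<lambda>T (j, k). real (gcd (T j) (T k))"]
    by (simp add: case_prod_unfold)
  also have "\<dots> \<le> (\<Sum>_\<in>Pairs. C_const s / x powr s)"
    using pair_gcd_tail[OF assms(1-3) _ _ _ assms(5)] by (intro sum_mono) (auto simp: Pairs_def)
  also have "\<dots> = real (card Pairs) * (C_const s / x powr s)" by simp
  also have "\<dots> \<le> real (N ^ 2) / 2 * (C_const s / x powr s)"
  proof (rule mult_right_mono)
    have "real (2 * card Pairs) \<le> real (N ^ 2)"
      using card_ordered_pairs[of N] unfolding Pairs_def by (rule of_nat_mono)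
    then show "real (card Pairs) \<le> real (N ^ 2) / 2" by simp
    show "0 \<le> C_const s / x powr s" using C by simp
  qed
  finally show ?thesis .
qed

theorem theorem1p1:
  fixes \<alpha> :: real
  assumes "\<alpha> > 0"
  shows "(\<forall>s::real. 0 < s \<and> s < 1 \<longrightarrow> convergent_prod (Cfactor s))
    \<and> (\<forall>s::real. \<forall>b::real. \<forall>N::nat. 0 < s \<and> s < 1 \<and> b > 0 \<and> N \<ge> 2 \<longrightarrow>
         measure_pmf.prob (T_pmf \<alpha> N)
           {T. Max {real (gcd (T j) (T k)) | j k. 1 \<le> j \<and> j < k \<and> k \<le> N}
                 \<ge> real N powr (2 / s) * b powr (1 / s)}
         \<le> C_const s / (2 * b))"
proof (intro conjI allI impI)
  fix s :: real assume "0 < s \<and> s < 1"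
  then show "convergent_prod (Cfactor s)" by (intro Cfactor_convergent) auto
next
  fix s b :: real and N :: nat
  assume h: "0 < s \<and> s < 1 \<and> b > 0 \<and> N \<ge> 2"
  define x where "x = real N powr (2 / s) * b powr (1 / s)"
  have x: "0 < x" using h by (simp add: x_def)
  have "x powr s = real N powr 2 * b"
    using h by (simp add: x_def powr_mult powr_powr)
  then have xs: "x powr s = real (N ^ 2) * b" using h by (simp add: powr_numeral)
  have "measure_pmf.prob (T_pmf \<alpha> N)
          {T. x \<le> Max {real (gcd (T j) (T k)) | j k. 1 \<le> j \<and> j < k \<and> k \<le> N}}
      \<le> real (N ^ 2) / 2 * (C_const s / x powr s)"
    by (rule max_gcd_tail) (use assms h x in auto)
  also have "\<dots> = C_const s / (2 * b)" using h by (simp add: xs)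
  finally show "measure_pmf.prob (T_pmf \<alpha> N)
           {T. Max {real (gcd (T j) (T k)) | j k. 1 \<le> j \<and> j < k \<and> k \<le> N}
                 \<ge> real N powr (2 / s) * b powr (1 / s)}
         \<le> C_const s / (2 * b)" by (simp add: x_def)
qed

end
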